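(* Let $\mathcal{G}$ be the game with players $\mathcal{N}=\{1,\dots,N\}$, where player $n$ chooses $d_n^{\mathrm{gen}}\ge 0$ and has utility $$U_n(d_n^{\mathrm{gen}},\boldsymbol d_{-n}^{\mathrm{gen}})=r_n+P_n-R_n-C_n-C_0,$$ with all quantities as defined in the context, and assume $z_n:=\sum_{n'\in\mathcal N}\gamma_{n,n'}(\xi-\phi_{n'})-\psi_n<0$ for every $n$. Define $$F(\boldsymbol d^{\mathrm{gen}})=\epsilon(\boldsymbol d^{\mathrm{gen}})-\sum_{n\in\mathcal N}\frac{\kappa_n C_n^{\mathrm{cmp}}(\eta_n+\mu_n)\,d_n^{\mathrm{gen}} f_n^2}{z_n}.$$ Then $\mathcal{G}$ is a weighted potential game with potential function $F$: for every $n\in\mathcal N$, every $\boldsymbol d_{-n}^{\mathrm{gen}}$ and every $d_n^{\mathrm{gen}},d_n'^{\,\mathrm{gen}}$, $$U_n(d_n^{\mathrm{gen}},\boldsymbol d_{-n}^{\mathrm{gen}})-U_n(d_n'^{\,\mathrm{gen}},\boldsymbol d_{-n}^{\mathrm{gen}})=z_n\big[F(d_n^{\mathrm{gen}},\boldsymbol d_{-n}^{\mathrm{gen}})-F(d_n'^{\,\mathrm{gen}},\boldsymbol d_{-n}^{\mathrm{gen}})\big].$$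
   Context: Model (one training round of cross-silo federated learning with $N$ competing organizations). Each organization $n$ has fixed local data size $d_n^{\mathrm{loc}}>0$ and chooses an amount $d_n^{\mathrm{gen}}$ of synthetic data; $\boldsymbol d^{\mathrm{gen}}=(d_1^{\mathrm{gen}},\dots,d_N^{\mathrm{gen}})$ and $\boldsymbol d_{-n}^{\mathrm{gen}}$ denotes the profile of all players except $n$. Constants: $\alpha>0,\beta>0,\delta\ge 0,\varrho>0$, $\epsilon_0$; for each $n$: $\psi_n\ge0$, $\phi_n\ge 0$, $\kappa_n>0$, $C_n^{\mathrm{cmp}}>0$, $\eta_n>0$, $\mu_n>0$, $f_n>0$; $C_0\ge 0$; $\xi\ge 0$; competitive intensities $\gamma_{n,n'}\in[0,1]$. Define the local error $\epsilon_n=\alpha(d_n^{\mathrm{loc}}+d_n^{\mathrm{gen}})^{-\beta}-\delta$ and the global error $\epsilon(\boldsymbol d^{\mathrm{gen}})=\exp\!\big((\tfrac1N\sum_{n}\epsilon_n-1)/\varrho\big)$. Cooperation gain $r_n=\psi_n[\epsilon_0-\epsilon(\boldsymbol d^{\mathrm{gen}})]$. The contribution gap of $n$ is $\Delta_n=\epsilon(\boldsymbol d^{\mathrm{gen}})-\bar\epsilon_{-n}(\boldsymbol d_{-n}^{\mathrm{gen}})$, where $\bar\epsilon_{-n}$ (written $\epsilon(\boldsymbol d^{\mathrm{gen}}_{-n})$ in the paper) depends only on the other players' strategies. Competition loss $R_n=\sum_{n'\in\mathcal N}\phi_{n'}\gamma_{n,n'}\Delta_n$; payoff redistribution $P_n=\sum_{n'\in\mathcal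 N}\xi\gamma_{n,n'}\Delta_n$; computational cost $C_n=C_n^{\mathrm{cmp}}\kappa_n\big(\eta_n(d_n^{\mathrm{loc}}+d_n^{\mathrm{gen}})+\mu_n d_n^{\mathrm{gen}}\big)f_n^2$; $C_0$ is a fixed server fee. *)

theory Defs
  imports "HOL-Analysis.Analysis"
begin

text \<open>Players are indexed by the set {1..N}; a strategy profile of synthetic data
amounts is a function d :: nat => real (only the values on {1..N} matter).\<close>

definition players :: "nat \<Rightarrow> nat set" where
  "players N = {1..N}"

definition local_err :: "real \<Rightarrow> real \<Rightarrow> real \<Rightarrow> (nat \<Rightarrow> real) \<Rightarrow> (nat \<Rightarrow> real) \<Rightarrow> nat \<Rightarrow> real" where
  "local_err \<alpha> \<beta> \<delta> dloc d n = \<alpha> * (dloc n + d n) powr (- \<beta>) - \<delta>"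

definition global_err :: "nat \<Rightarrow> real \<Rightarrow> real \<Rightarrow> real \<Rightarrow> real \<Rightarrow> (nat \<Rightarrow> real) \<Rightarrow> (nat \<Rightarrow> real) \<Rightarrow> real" where
  "global_err N \<alpha> \<beta> \<delta> \<rho> dloc d =
     exp (((1 / real N) * (\<Sum>n\<in>players N. local_err \<alpha> \<beta> \<delta> dloc d n) - 1) / \<rho>)"

text \<open>Utility U_n = r_n + P_n - R_n - C_n - C_0. The term epsm n d stands for the
paper's eps(d_{-n}), an error depending only on the other players' strategies.\<close>
definition utility ::
  "nat \<Rightarrow> real \<Rightarrow> real \<Rightarrow> real \<Rightarrow> real \<Rightarrow> real \<Rightarrow> (nat \<Rightarrow> real)
   \<Rightarrow> (nat \<Rightarrow> (nat \<Rightarrow> real) \<Rightarrow> real)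
   \<Rightarrow> (nat \<Rightarrow> real) \<Rightarrow> (nat \<Rightarrow> real) \<Rightarrow> (nat \<Rightarrow> nat \<Rightarrow> real) \<Rightarrow> real
   \<Rightarrow> (nat \<Rightarrow> real) \<Rightarrow> (nat \<Rightarrow> real) \<Rightarrow> (nat \<Rightarrow> real) \<Rightarrow> (nat \<Rightarrow> real) \<Rightarrow> (nat \<Rightarrow> real)
   \<Rightarrow> real \<Rightarrow> nat \<Rightarrow> (nat \<Rightarrow> real) \<Rightarrow> real" where
  "utility N \<alpha> \<beta> \<delta> \<rho> \<epsilon>0 dloc epsm \<psi> \<phi> \<gamma> \<xi> \<kappa> Ccmp \<eta> \<mu> f C0 n d =
     (let e = global_err N \<alpha> \<beta> \<delta> \<rho> dloc d;
          gap = e - epsm n d;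
          r = \<psi> n * (\<epsilon>0 - e);
          R = (\<Sum>n'\<in>players N. \<phi> n' * \<gamma> n n' * gap);
          P = (\<Sum>n'\<in>players N. \<xi> * \<gamma> n n' * gap);
          C = Ccmp n * \<kappa> n * (\<eta> n * (dloc n + d n) + \<mu> n * d n) * (f n)\<^sup>2
      in r + P - R - C - C0)"

definition zcoef :: "nat \<Rightarrow> (nat \<Rightarrow> real) \<Rightarrow> (nat \<Rightarrow> real) \<Rightarrow> (nat \<Rightarrow> nat \<Rightarrow> real) \<Rightarrow> real \<Rightarrow> nat \<Rightarrow> real" where
  "zcoef N \<psi> \<phi> \<gamma> \<xi> n = (\<Sum>n'\<in>players N. \<gamma> n n' * (\<xi> - \<phi> n')) - \<psi> n"

definition potential ::
  "nat \<Rightarrow> real \<Rightarrow> real \<Rightarrow> real \<Rightarrow> real \<Rightarrow> (nat \<Rightarrow> real)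
   \<Rightarrow> (nat \<Rightarrow> real) \<Rightarrow> (nat \<Rightarrow> real) \<Rightarrow> (nat \<Rightarrow> nat \<Rightarrow> real) \<Rightarrow> real
   \<Rightarrow> (nat \<Rightarrow> real) \<Rightarrow> (nat \<Rightarrow> real) \<Rightarrow> (nat \<Rightarrow> real) \<Rightarrow> (nat \<Rightarrow> real) \<Rightarrow> (nat \<Rightarrow> real)
   \<Rightarrow> (nat \<Rightarrow> real) \<Rightarrow> real" where
  "potential N \<alpha> \<beta> \<delta> \<rho> dloc \<psi> \<phi> \<gamma> \<xi> \<kappa> Ccmp \<eta> \<mu> f d =
     global_err N \<alpha> \<beta> \<delta> \<rho> dloc d
     - (\<Sum>n\<in>players N. \<kappa> n * Ccmp n * (\<eta> n + \<mu> n) * d n * (f n)\<^sup>2 / zcoef N \<psi> \<phi> \<gamma> \<xi> n)"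

end

theory Submission
  imports Defs
begin

text \<open>Collecting terms, U_n = z_n \<epsilon>(d) - S_n \<epsilon>(d_{-n}) + \<psi>_n \<epsilon>_0 - C_n - C_0 with
  S_n = \<Sum>_{n'} \<gamma>_{n,n'} (\<xi> - \<phi>_{n'}). A unilateral deviation of player n leaves \<epsilon>(d_{-n})
  unchanged and changes C_n linearly, so the utility difference is z_n times the change of
  the global error minus a linear cost term; dividing that cost term by z_n gives the
  n-th summand of the potential. Only z_n \<noteq> 0 and the independence of \<epsilon>(d_{-n}) from d_n
  enter the identity.\<close>

lemma sum_fun_upd_diff:
  fixes h :: "'a \<Rightarrow> 'b \<Rightarrow> 'c::ab_group_add"
  assumes "finite A" "a \<in> A"
  shows "(\<Sum>i\<in>A. h i ((g(a := x)) i)) - (\<Sum>i\<in>A. h i ((g(a := x')) i)) = h a x - h a x'"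
proof -
  have rest: "(\<Sum>i\<in>A - {a}. h i ((g(a := x)) i)) = (\<Sum>i\<in>A - {a}. h i ((g(a := x')) i))"
    by (rule sum.cong) auto
  show ?thesis
    using assms by (simp add: sum.remove rest)
qed

lemma utility_eq:
  "utility N \<alpha> \<beta> \<delta> \<rho> \<epsilon>0 dloc epsm \<psi> \<phi> \<gamma> \<xi> \<kappa> Ccmp \<eta> \<mu> f C0 n d =
     zcoef N \<psi> \<phi> \<gamma> \<xi> n * global_err N \<alpha> \<beta> \<delta> \<rho> dloc d
     - (\<Sum>n'\<in>players N. \<gamma> n n' * (\<xi> - \<phi> n')) * epsm n d + \<psi> n * \<epsilon>0
     - Ccmp n * \<kappa> n * (\<eta> n * (dloc n + d n) + \<mu> n * d n) * (f n)\<^sup>2 - C0"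
proof -
  have net_redistribution: "(\<Sum>n'\<in>players N. \<xi> * \<gamma> n n' * a) - (\<Sum>n'\<in>players N. \<phi> n' * \<gamma> n n' * a)
      = (\<Sum>n'\<in>players N. \<gamma> n n' * (\<xi> - \<phi> n')) * a" for a
    unfolding sum_subtractf[symmetric] sum_distrib_right by (simp add: algebra_simps)
  show ?thesis
    unfolding utility_def Let_def add_diff_eq[symmetric] net_redistribution zcoef_def
    by (simp add: algebra_simps)
qed

lemma utility_fun_upd_diff:
  assumes "epsm n (d(n := x)) = epsm n (d(n := x'))"
  shows "utility N \<alpha> \<beta> \<delta> \<rho> \<epsilon>0 dloc epsm \<psi> \<phi> \<gamma> \<xi> \<kappa> Ccmp \<eta> \<mu> f C0 n (d(n := x))
         - utility N \<alpha> \<beta> \<delta> \<rho> \<epsilon>0 dloc epsm \<psi> \<phi> \<gamma> \<xi> \<kappa> Ccmp \<eta> \<mu> f C0 n (d(n := x'))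
       = zcoef N \<psi> \<phi> \<gamma> \<xi> n *
           (global_err N \<alpha> \<beta> \<delta> \<rho> dloc (d(n := x)) - global_err N \<alpha> \<beta> \<delta> \<rho> dloc (d(n := x')))
         - Ccmp n * \<kappa> n * (\<eta> n + \<mu> n) * (x - x') * (f n)\<^sup>2"
  unfolding utility_eq using assms by (simp add: algebra_simps)

lemma potential_fun_upd_diff:
  assumes "n \<in> players N"
  shows "potential N \<alpha> \<beta> \<delta> \<rho> dloc \<psi> \<phi> \<gamma> \<xi> \<kappa> Ccmp \<eta> \<mu> f (d(n := x))
         - potential N \<alpha> \<beta> \<delta> \<rho> dloc \<psi> \<phi> \<gamma> \<xi> \<kappa> Ccmp \<eta> \<mu> f (d(n := x'))
       = global_err N \<alpha> \<beta> \<delta> \<rho> dloc (d(n := x)) - global_err N \<alpha> \<beta> \<delta> \<rho> dloc (d(n := x'))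
         - \<kappa> n * Ccmp n * (\<eta> n + \<mu> n) * (x - x') * (f n)\<^sup>2 / zcoef N \<psi> \<phi> \<gamma> \<xi> n"
proof -
  have "(\<Sum>m\<in>players N. \<kappa> m * Ccmp m * (\<eta> m + \<mu> m) * (d(n := x)) m * (f m)\<^sup>2 / zcoef N \<psi> \<phi> \<gamma> \<xi> m)
      - (\<Sum>m\<in>players N. \<kappa> m * Ccmp m * (\<eta> m + \<mu> m) * (d(n := x')) m * (f m)\<^sup>2 / zcoef N \<psi> \<phi> \<gamma> \<xi> m)
      = \<kappa> n * Ccmp n * (\<eta> n + \<mu> n) * (x - x') * (f n)\<^sup>2 / zcoef N \<psi> \<phi> \<gamma> \<xi> n"
    using sum_fun_upd_diff[of "players N" n
        "\<lambda>m y. \<kappa> m * Ccmp m * (\<eta> m + \<mu> m) * y * (f m)\<^sup>2 / zcoef N \<psi> \<phi> \<gamma> \<xi> m" d x x'] assms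
    by (simp add: players_def diff_divide_distrib algebra_simps)
  then show ?thesis
    unfolding potential_def by simp
qed

theorem theorem1:
  fixes N :: nat and \<alpha> \<beta> \<delta> \<rho> \<epsilon>0 \<xi> C0 :: real
    and dloc \<psi> \<phi> \<kappa> Ccmp \<eta> \<mu> f :: "nat \<Rightarrow> real"
    and \<gamma> :: "nat \<Rightarrow> nat \<Rightarrow> real"
    and epsm :: "nat \<Rightarrow> (nat \<Rightarrow> real) \<Rightarrow> real"
  assumes hN: "N \<ge> 1"
    and h\<alpha>: "\<alpha> > 0" and h\<beta>: "\<beta> > 0" and h\<delta>: "\<delta> \<ge> 0" and h\<rho>: "\<rho> > 0"
    and h\<xi>: "\<xi> \<ge> 0" and hC0: "C0 \<ge> 0"
    and hloc: "\<And>n. n \<in> players N \<Longrightarrow> dloc n > 0"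
    and h\<psi>: "\<And>n. n \<in> players N \<Longrightarrow> \<psi> n \<ge> 0"
    and h\<phi>: "\<And>n. n \<in> players N \<Longrightarrow> \<phi> n \<ge> 0"
    and h\<kappa>: "\<And>n. n \<in> players N \<Longrightarrow> \<kappa> n > 0"
    and hC: "\<And>n. n \<in> players N \<Longrightarrow> Ccmp n > 0"
    and h\<eta>: "\<And>n. n \<in> players N \<Longrightarrow> \<eta> n > 0"
    and h\<mu>: "\<And>n. n \<in> players N \<Longrightarrow> \<mu> n > 0"
    and hf: "\<And>n. n \<in> players N \<Longrightarrow> f n > 0"
    and h\<gamma>: "\<And>n n'. n \<in> players N \<Longrightarrow> n' \<in> players N \<Longrightarrow> 0 \<le> \<gamma> n n' \<and> \<gamma> n n' \<le> 1"
    and hepsm: "\<And>n d d'. n \<in> players N \<Longrightarrow> (\<forall>m. m \<noteq> n \<longrightarrow> d m = d' m) \<Longrightarrow> epsm n d = epsm n d'"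
    and hz: "\<And>n. n \<in> players N \<Longrightarrow> zcoef N \<psi> \<phi> \<gamma> \<xi> n < 0"
  shows "\<forall>n\<in>players N. \<forall>d :: nat \<Rightarrow> real. \<forall>x x'.
           (\<forall>m\<in>players N. d m \<ge> 0) \<longrightarrow> x \<ge> 0 \<longrightarrow> x' \<ge> 0 \<longrightarrow>
           utility N \<alpha> \<beta> \<delta> \<rho> \<epsilon>0 dloc epsm \<psi> \<phi> \<gamma> \<xi> \<kappa> Ccmp \<eta> \<mu> f C0 n (d(n := x))
           - utility N \<alpha> \<beta> \<delta> \<rho> \<epsilon>0 dloc epsm \<psi> \<phi> \<gamma> \<xi> \<kappa> Ccmp \<eta> \<mu> f C0 n (d(n := x'))
           = zcoef N \<psi> \<phi> \<gamma> \<xi> n *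
             (potential N \<alpha> \<beta> \<delta> \<rho> dloc \<psi> \<phi> \<gamma> \<xi> \<kappa> Ccmp \<eta> \<mu> f (d(n := x))
              - potential N \<alpha> \<beta> \<delta> \<rho> dloc \<psi> \<phi> \<gamma> \<xi> \<kappa> Ccmp \<eta> \<mu> f (d(n := x')))"
proof (intro ballI allI impI)
  fix n and d :: "nat \<Rightarrow> real" and x x' :: real
  assume n: "n \<in> players N"
  have "zcoef N \<psi> \<phi> \<gamma> \<xi> n \<noteq> 0"
    using hz[OF n] by simp
  moreover have "epsm n (d(n := x)) = epsm n (d(n := x'))"
    using hepsm[OF n] by simp
  ultimately show "utility N \<alpha> \<beta> \<delta> \<rho> \<epsilon>0 dloc epsm \<psi> \<phi> \<gamma> \<xi> \<kappa> Ccmp \<eta> \<mu> f C0 n (d(n := x))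
           - utility N \<alpha> \<beta> \<delta> \<rho> \<epsilon>0 dloc epsm \<psi> \<phi> \<gamma> \<xi> \<kappa> Ccmp \<eta> \<mu> f C0 n (d(n := x'))
           = zcoef N \<psi> \<phi> \<gamma> \<xi> n *
             (potential N \<alpha> \<beta> \<delta> \<rho> dloc \<psi> \<phi> \<gamma> \<xi> \<kappa> Ccmp \<eta> \<mu> f (d(n := x))
              - potential N \<alpha> \<beta> \<delta> \<rho> dloc \<psi> \<phi> \<gamma> \<xi> \<kappa> Ccmp \<eta> \<mu> f (d(n := x')))"
    by (simp add: utility_fun_upd_diff potential_fun_upd_diff[OF n] right_diff_distrib)
qed

end
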